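(* Let $(B,D,d,\theta)$ be a regular E-system, $\mathcal A=\mathcal A_{B\to D}$ its associated Ann-category, $Q$ a ring, and $(F,\breve F,\widetilde F):\mathrm{Dis}\,Q\to\mathcal A$ an Ann-functor. Let $\psi:Q\to\operatorname{Coker}d$ be the ring homomorphism $u\mapsto$ (class of $F(u)$ in $D/\operatorname{Im}d$). Then there exists a ring extension of $B$ by $Q$ of type $B\to D$ inducing $\psi$.
   Context: Bimultiplications of a ring $A$ form the ring $M_A$; $\mu_c$ is the inner bimultiplication $a\mapsto ca$, $a\mapsto ac$; two bimultiplications $\sigma,\tau$ are permutable if $\sigma(a\tau)=(\sigma a)\tau$, $\tau(a\sigma)=(\tau a)\sigma$ for all $a$. E-system $(B,D,d,\theta)$: $B$ a ring, $D$ a unital ring, $d:B\to D$, $\theta:D\to M_B$ ring homomorphisms with $\theta d=\mu$, $d(\theta_xb)=x\,d(b)$, $d(b\theta_x)=d(b)x$; regular if $\theta(1)=1$ and elements of $\theta(D)$ are pairwise permutable. Morphism of E-systems $(f_1,f_0)$: ring homomorphisms with $f_0d=d'f_1$, $f_1(\theta_xb)=\theta'_{f_0(x)}f_1(b)$, $f_1(b\theta_x)=f_1(b)\theta'_{f_0(x)}$. Associated Ann-category $\mathcal A_{B\to D}$: objects elements of $D$, morphisms $x\to y$ the $b\in B$ with $y=d(b)+x$, composition by addition, $\oplus,\otimes$ given by $+,\cdot$ on objects and by $b+b'$, $bb'+b\theta_{x'}+\theta_xb'$ on morphisms $x\xrightarrow{b}y$, $x'\xrightarrow{b'}y'$, all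 constraints identities. $\mathrm{Dis}\,Q$ is the strict Ann-category with objects the elements of $Q$, only identity morphisms, $\oplus,\otimes$ the ring operations. An Ann-functor is a functor with natural isomorphisms $\breve F:F(X\oplus Y)\to FX\oplus FY$, $\widetilde F:F(X\otimes Y)\to FX\otimes FY$ making it symmetric monoidal for $\oplus$, monoidal for $\otimes$, compatible with distributivity constraints. A ring extension of $B$ by $Q$ of type $B\to D$ is an exact sequence of ring homomorphisms $0\to B\xrightarrow{j}E\xrightarrow{p}Q\to0$ together with a ring homomorphism $\varepsilon:E\to D$ such that $(B,E,j,\theta')$ is an E-system with $\theta'$ of bimultiplication type ($\theta'_e b=eb$, $b\theta'_e=be$ computed in $E$, $B$ identified with $j(B)$) and $(\mathrm{id}_B,\varepsilon)$ is a morphism of E-systems $(B,E,j,\theta')\to(B,D,d,\theta)$. It induces the unique ring homomorphism $\psi:Q\to\operatorname{Coker}d$ with $\psi\circ p=q\circ\varepsilon$, $q:D\to\operatorname{Coker}d=D/\operatorname{Im}d$ the projection. *)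

theory Defs
  imports "HOL-Algebra.Ring"
begin

definition rhom :: "('a::ring \<Rightarrow> 'c::ring) \<Rightarrow> bool" where
  "rhom f \<longleftrightarrow> (\<forall>x y. f (x + y) = f x + f y \<and> f (x * y) = f x * f y)"

text \<open>A bimultiplication sigma of B is a pair (L, R) of maps, L a = sigma a and R a = a sigma.\<close>
definition bimult :: "('b::ring \<Rightarrow> 'b) \<Rightarrow> ('b \<Rightarrow> 'b) \<Rightarrow> bool" where
  "bimult L R \<longleftrightarrow> (\<forall>a b. L (a + b) = L a + L b \<and> R (a + b) = R a + R b
      \<and> L (a * b) = L a * b \<and> R (a * b) = a * R b \<and> a * L b = R a * b)"

text \<open>E-system (B,D,d,theta); thL x b = theta_x b, thR x b = b theta_x.
  Ring structure of M_B: (sigma tau) a = sigma (tau a), a (sigma tau) = (a sigma) tau.\<close>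
definition e_system :: "('b::ring \<Rightarrow> 'd::ring_1) \<Rightarrow> ('d \<Rightarrow> 'b \<Rightarrow> 'b) \<Rightarrow> ('d \<Rightarrow> 'b \<Rightarrow> 'b) \<Rightarrow> bool" where
  "e_system d thL thR \<longleftrightarrow>
     rhom d
   \<and> (\<forall>x. bimult (thL x) (thR x))
   \<and> (\<forall>x y b. thL (x + y) b = thL x b + thL y b \<and> thR (x + y) b = thR x b + thR y b
             \<and> thL (x * y) b = thL x (thL y b) \<and> thR (x * y) b = thR y (thR x b))
   \<and> (\<forall>c b. thL (d c) b = c * b \<and> thR (d c) b = b * c)
   \<and> (\<forall>x b. d (thL x b) = x * d b \<and> d (thR x b) = d b * x)"

definition regular :: "('d::ring_1 \<Rightarrow> 'b::ring \<Rightarrow> 'b) \<Rightarrow> ('d \<Rightarrow> 'b \<Rightarrow> 'b) \<Rightarrow> bool" where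
  "regular thL thR \<longleftrightarrow>
     (\<forall>b. thL 1 b = b \<and> thR 1 b = b)
   \<and> (\<forall>x y b. thL x (thR y b) = thR y (thL x b))"

text \<open>Tensor of morphisms in A_{B->D}: for x --b--> y, x' --b'--> y',
  the morphism b b' + b theta_{x'} + theta_x b'.  Composition of morphisms is +,
  identities are 0, the oplus of morphisms is +.\<close>
definition mtens :: "('d::ring_1 \<Rightarrow> 'b::ring \<Rightarrow> 'b) \<Rightarrow> ('d \<Rightarrow> 'b \<Rightarrow> 'b) \<Rightarrow> 'd \<Rightarrow> 'd \<Rightarrow> 'b \<Rightarrow> 'b \<Rightarrow> 'b" where
  "mtens thL thR x x' b b' = b * b' + thR x' b + thL x b'"

text \<open>Fb u v : F(u+v) \<rightarrow> F u + F v,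
  Ft u v : F(u v) \<rightarrow> F u * F v (morphisms of A are elements of B).  Since Dis Q is discrete,
  functoriality and naturality are automatic.  All constraints of both categories are
  identities, so the coherence diagrams become the equations below.\<close>
definition ann_functor ::
  "('b::ring \<Rightarrow> 'd::ring_1) \<Rightarrow> ('d \<Rightarrow> 'b \<Rightarrow> 'b) \<Rightarrow> ('d \<Rightarrow> 'b \<Rightarrow> 'b)
   \<Rightarrow> ('q::ring_1 \<Rightarrow> 'd) \<Rightarrow> ('q \<Rightarrow> 'q \<Rightarrow> 'b) \<Rightarrow> ('q \<Rightarrow> 'q \<Rightarrow> 'b) \<Rightarrow> bool" where
  "ann_functor d thL thR F Fb Ft \<longleftrightarrow>
     \<comment> \<open>Fb u v and Ft u v are morphisms with the right source and target\<close>
     (\<forall>u v. F u + F v = d (Fb u v) + F (u + v))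
   \<and> (\<forall>u v. F u * F v = d (Ft u v) + F (u * v))
     \<comment> \<open>symmetric monoidal for oplus: associativity, commutativity, unit\<close>
   \<and> (\<forall>u v w. Fb (u + v) w + (Fb u v + 0) = Fb u (v + w) + (0 + Fb v w))
   \<and> (\<forall>u v. Fb u v = Fb v u)
   \<and> (\<exists>c. F 0 = d c + 0 \<and> (\<forall>u. Fb u 0 + (0 + - c) = 0 \<and> Fb 0 u + (- c + 0) = 0))
     \<comment> \<open>monoidal for otimes: associativity, unit\<close>
   \<and> (\<forall>u v w. Ft (u * v) w + mtens thL thR (F (u * v)) (F w) (Ft u v) 0
              = Ft u (v * w) + mtens thL thR (F u) (F (v * w)) 0 (Ft v w))
   \<and> (\<exists>c. F 1 = d c + 1 \<and> (\<forall>u. Ft u 1 + mtens thL thR (F u) (F 1) 0 (- c) = 0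
                              \<and> Ft 1 u + mtens thL thR (F 1) (F u) (- c) 0 = 0))
     \<comment> \<open>compatibility with the (left and right) distributivity constraints\<close>
   \<and> (\<forall>u v w. Ft u (v + w) + mtens thL thR (F u) (F (v + w)) 0 (Fb v w)
              = Fb (u * v) (u * w) + (Ft u v + Ft u w))
   \<and> (\<forall>u v w. Ft (u + v) w + mtens thL thR (F (u + v)) (F w) (Fb u v) 0
              = Fb (u * w) (v * w) + (Ft u w + Ft v w))"

text \<open>Ring extension 0 \<rightarrow> B --j--> E --p--> Q \<rightarrow> 0 of type B \<rightarrow> D, with eps : E \<rightarrow> D.
  E is a (unital) ring in the sense of HOL-Algebra.  theta' of bimultiplication type.\<close>
definition thL' :: "('e, 'm) ring_scheme \<Rightarrow> ('b \<Rightarrow> 'e) \<Rightarrow> 'e \<Rightarrow> 'b \<Rightarrow> 'b" where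
  "thL' E j e b = the_inv j (e \<otimes>\<^bsub>E\<^esub> j b)"

definition thR' :: "('e, 'm) ring_scheme \<Rightarrow> ('b \<Rightarrow> 'e) \<Rightarrow> 'e \<Rightarrow> 'b \<Rightarrow> 'b" where
  "thR' E j e b = the_inv j (j b \<otimes>\<^bsub>E\<^esub> e)"

definition ring_extension ::
  "('b::ring \<Rightarrow> 'd::ring_1) \<Rightarrow> ('d \<Rightarrow> 'b \<Rightarrow> 'b) \<Rightarrow> ('d \<Rightarrow> 'b \<Rightarrow> 'b)
   \<Rightarrow> ('e, 'm) ring_scheme \<Rightarrow> ('b \<Rightarrow> 'e) \<Rightarrow> ('e \<Rightarrow> 'q::ring_1) \<Rightarrow> ('e \<Rightarrow> 'd) \<Rightarrow> bool" where
  "ring_extension d thL thR E j p eps \<longleftrightarrow>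
     ring E
     \<comment> \<open>j, p, eps ring homomorphisms\<close>
   \<and> (\<forall>b. j b \<in> carrier E)
   \<and> (\<forall>a b. j (a + b) = j a \<oplus>\<^bsub>E\<^esub> j b \<and> j (a * b) = j a \<otimes>\<^bsub>E\<^esub> j b)
   \<and> (\<forall>e\<in>carrier E. \<forall>e'\<in>carrier E. p (e \<oplus>\<^bsub>E\<^esub> e') = p e + p e' \<and> p (e \<otimes>\<^bsub>E\<^esub> e') = p e * p e')
   \<and> (\<forall>e\<in>carrier E. \<forall>e'\<in>carrier E. eps (e \<oplus>\<^bsub>E\<^esub> e') = eps e + eps e' \<and> eps (e \<otimes>\<^bsub>E\<^esub> e') = eps e * eps e')
     \<comment> \<open>exactness\<close>
   \<and> inj j
   \<and> range j = {e \<in> carrier E. p e = 0}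
   \<and> p ` carrier E = UNIV
     \<comment> \<open>(B, E, j, theta') is an E-system, theta' of bimultiplication type\<close>
   \<and> (\<forall>e\<in>carrier E. bimult (thL' E j e) (thR' E j e))
   \<and> (\<forall>e\<in>carrier E. \<forall>e'\<in>carrier E. \<forall>b.
          thL' E j (e \<oplus>\<^bsub>E\<^esub> e') b = thL' E j e b + thL' E j e' b
        \<and> thR' E j (e \<oplus>\<^bsub>E\<^esub> e') b = thR' E j e b + thR' E j e' b
        \<and> thL' E j (e \<otimes>\<^bsub>E\<^esub> e') b = thL' E j e (thL' E j e' b)
        \<and> thR' E j (e \<otimes>\<^bsub>E\<^esub> e') b = thR' E j e' (thR' E j e b))
   \<and> (\<forall>c b. thL' E j (j c) b = c * b \<and> thR' E j (j c) b = b * c)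
   \<and> (\<forall>e\<in>carrier E. \<forall>b. j (thL' E j e b) = e \<otimes>\<^bsub>E\<^esub> j b \<and> j (thR' E j e b) = j b \<otimes>\<^bsub>E\<^esub> e)
     \<comment> \<open>(id_B, eps) is a morphism of E-systems to (B, D, d, theta)\<close>
   \<and> (\<forall>b. eps (j b) = d b)
   \<and> (\<forall>e\<in>carrier E. \<forall>b. thL' E j e b = thL (eps e) b \<and> thR' E j e b = thR (eps e) b)"

text \<open>The extension induces psi : Q \<rightarrow> Coker d, psi u = class of F u, i.e.
  psi o p = q o eps, where q : D \<rightarrow> D / Im d.\<close>
definition induces_psi :: "('b::ring \<Rightarrow> 'd::ring_1) \<Rightarrow> ('q::ring_1 \<Rightarrow> 'd)
    \<Rightarrow> ('e, 'm) ring_scheme \<Rightarrow> ('e \<Rightarrow> 'q) \<Rightarrow> ('e \<Rightarrow> 'd) \<Rightarrow> bool" where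
  "induces_psi d F E p eps \<longleftrightarrow> (\<forall>e\<in>carrier E. eps e - F (p e) \<in> range d)"

end

theory Submission
  imports Defs
begin

text \<open>The extension is the crossed product \<open>E = B \<times> Q\<close> twisted by the structure morphisms of
  the Ann-functor: \<open>(a, u) + (b, v) = (a + b + Fb u v, u + v)\<close> and
  \<open>(a, u) (b, v) = (a b + a \<theta>(F v) + \<theta>(F u) b + Ft u v, u v)\<close>.  The coherence conditions of
  the Ann-functor are precisely the cocycle identities making \<open>E\<close> a ring; regularity of the
  E-system is what makes the twisted product associative and unital.  With the inclusion
  \<open>b \<mapsto> (b, 0)\<close> (shifted by the unit constraint of \<open>F\<close>), the projection \<open>(b, u) \<mapsto> u\<close> and
  \<open>\<epsilon>(b, u) = d b + F u\<close> this is an extension of type \<open>B \<rightarrow> D\<close>, and \<open>\<epsilon>(b, u) - F u \<in> Im d\<close>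
  says that it induces \<open>\<psi>\<close>.\<close>

locale esystem =
  fixes d :: "'b::ring \<Rightarrow> 'd::ring_1"
    and thL thR :: "'d \<Rightarrow> 'b \<Rightarrow> 'b"
  assumes e_system: "e_system d thL thR"
begin

lemma d_add [simp]: "d (a + b) = d a + d b"
  using e_system unfolding e_system_def rhom_def by blast

lemma d_mult [simp]: "d (a * b) = d a * d b"
  using e_system unfolding e_system_def rhom_def by blast

lemma d_zero [simp]: "d 0 = 0"
  using d_add[of 0 0] by simp

lemma d_minus [simp]: "d (- a) = - d a"
  by (rule minus_unique[symmetric]) (use d_add[of a "- a"] in simp)

lemma d_diff [simp]: "d (a - b) = d a - d b"
  by (metis d_add d_minus diff_conv_add_uminus)

lemma bimult_theta: "bimult (thL x) (thR x)"
  using e_system unfolding e_system_def by blast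

lemma thL_add [simp]: "thL x (a + b) = thL x a + thL x b"
  using bimult_theta unfolding bimult_def by blast

lemma thR_add [simp]: "thR x (a + b) = thR x a + thR x b"
  using bimult_theta unfolding bimult_def by blast

lemma thL_mult [simp]: "thL x (a * b) = thL x a * b"
  using bimult_theta unfolding bimult_def by blast

lemma thR_mult [simp]: "thR x (a * b) = a * thR x b"
  using bimult_theta unfolding bimult_def by blast

lemma mult_thL_eq_thR_mult: "a * thL x b = thR x a * b"
  using bimult_theta unfolding bimult_def by blast

lemma thL_zero [simp]: "thL x 0 = 0"
  using thL_add[of x 0 0] by simp

lemma thR_zero [simp]: "thR x 0 = 0"
  using thR_add[of x 0 0] by simp

lemma thL_minus [simp]: "thL x (- a) = - thL x a"
  by (rule minus_unique[symmetric]) (use thL_add[of x a "- a"] in simp)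

lemma thR_minus [simp]: "thR x (- a) = - thR x a"
  by (rule minus_unique[symmetric]) (use thR_add[of x a "- a"] in simp)

lemma thL_diff [simp]: "thL x (a - b) = thL x a - thL x b"
  by (metis thL_add thL_minus diff_conv_add_uminus)

lemma thR_diff [simp]: "thR x (a - b) = thR x a - thR x b"
  by (metis thR_add thR_minus diff_conv_add_uminus)

lemma thL_op_add [simp]: "thL (x + y) b = thL x b + thL y b"
  using e_system unfolding e_system_def by blast

lemma thR_op_add [simp]: "thR (x + y) b = thR x b + thR y b"
  using e_system unfolding e_system_def by blast

lemma thL_op_mult: "thL (x * y) b = thL x (thL y b)"
  using e_system unfolding e_system_def by blast

lemma thR_op_mult: "thR (x * y) b = thR y (thR x b)"
  using e_system unfolding e_system_def by blast

lemma thL_op_zero [simp]: "thL 0 b = 0"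
  using thL_op_add[of 0 0 b] by simp

lemma thR_op_zero [simp]: "thR 0 b = 0"
  using thR_op_add[of 0 0 b] by simp

lemma thL_op_minus [simp]: "thL (- x) b = - thL x b"
  by (rule minus_unique[symmetric]) (use thL_op_add[of x "- x" b] in simp)

lemma thR_op_minus [simp]: "thR (- x) b = - thR x b"
  by (rule minus_unique[symmetric]) (use thR_op_add[of x "- x" b] in simp)

lemma thL_op_diff [simp]: "thL (x - y) b = thL x b - thL y b"
  by (metis thL_op_add thL_op_minus diff_conv_add_uminus)

lemma thR_op_diff [simp]: "thR (x - y) b = thR x b - thR y b"
  by (metis thR_op_add thR_op_minus diff_conv_add_uminus)

lemma thL_d [simp]: "thL (d c) b = c * b"
  using e_system unfolding e_system_def by blast

lemma thR_d [simp]: "thR (d c) b = b * c"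
  using e_system unfolding e_system_def by blast

lemma d_thL [simp]: "d (thL x b) = x * d b"
  using e_system unfolding e_system_def by blast

lemma d_thR [simp]: "d (thR x b) = d b * x"
  using e_system unfolding e_system_def by blast

end

locale regular_esystem = esystem +
  assumes regular: "regular thL thR"
begin

lemma thL_op_one [simp]: "thL 1 b = b"
  using regular unfolding regular_def by blast

lemma thR_op_one [simp]: "thR 1 b = b"
  using regular unfolding regular_def by blast

lemma thL_thR_commute: "thL x (thR y b) = thR y (thL x b)"
  using regular unfolding regular_def by blast

end

locale ann_functor_to_esystem = regular_esystem +
  fixes F :: "'q::ring_1 \<Rightarrow> 'd::ring_1"
    and Fb Ft :: "'q \<Rightarrow> 'q \<Rightarrow> 'b::ring"
  assumes ann_functor: "ann_functor d thL thR F Fb Ft"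
begin

lemma F_add_defect: "F u + F v = d (Fb u v) + F (u + v)"
  using ann_functor unfolding ann_functor_def by blast

lemma F_mult_defect: "F u * F v = d (Ft u v) + F (u * v)"
  using ann_functor unfolding ann_functor_def by blast

lemma Fb_assoc: "Fb (u + v) w + Fb u v = Fb u (v + w) + Fb v w"
proof -
  have "\<forall>u v w. Fb (u + v) w + (Fb u v + 0) = Fb u (v + w) + (0 + Fb v w)"
    using ann_functor unfolding ann_functor_def by blast
  then show ?thesis by simp
qed

lemma Fb_commute: "Fb u v = Fb v u"
  using ann_functor unfolding ann_functor_def by blast

lemma Ft_assoc: "Ft (u * v) w = Ft u (v * w) + thL (F u) (Ft v w) - thR (F w) (Ft u v)"
  using ann_functor unfolding ann_functor_def mtens_def by (simp add: algebra_simps)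

lemma Ft_distrib_left: "Ft u (v + w) + thL (F u) (Fb v w) = Fb (u * v) (u * w) + (Ft u v + Ft u w)"
  using ann_functor unfolding ann_functor_def mtens_def by simp

lemma Ft_distrib_right: "Ft (u + v) w + thR (F w) (Fb u v) = Fb (u * w) (v * w) + (Ft u w + Ft v w)"
  using ann_functor unfolding ann_functor_def mtens_def by simp

definition zero_constraint :: 'b where
  "zero_constraint = (SOME c. F 0 = d c + 0
     \<and> (\<forall>u. Fb u 0 + (0 + - c) = 0 \<and> Fb 0 u + (- c + 0) = 0))"

definition one_constraint :: 'b where
  "one_constraint = (SOME c. F 1 = d c + 1
     \<and> (\<forall>u. Ft u 1 + mtens thL thR (F u) (F 1) 0 (- c) = 0
          \<and> Ft 1 u + mtens thL thR (F 1) (F u) (- c) 0 = 0))"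

lemma zero_constraint: "F 0 = d zero_constraint + 0
    \<and> (\<forall>u. Fb u 0 + (0 + - zero_constraint) = 0 \<and> Fb 0 u + (- zero_constraint + 0) = 0)"
  unfolding zero_constraint_def
  by (rule someI_ex) (use ann_functor in \<open>unfold ann_functor_def, blast\<close>)

lemma one_constraint: "F 1 = d one_constraint + 1
    \<and> (\<forall>u. Ft u 1 + mtens thL thR (F u) (F 1) 0 (- one_constraint) = 0
         \<and> Ft 1 u + mtens thL thR (F 1) (F u) (- one_constraint) 0 = 0)"
  unfolding one_constraint_def
  by (rule someI_ex) (use ann_functor in \<open>unfold ann_functor_def, blast\<close>)

lemma F_zero: "F 0 = d zero_constraint"
  using zero_constraint by simp

lemma Fb_zero_right [simp]: "Fb u 0 = zero_constraint"
  using zero_constraint by (simp add: add_eq_0_iff2)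

lemma Fb_zero_left [simp]: "Fb 0 u = zero_constraint"
  using zero_constraint by (simp add: add_eq_0_iff2)

lemma F_one: "F 1 = d one_constraint + 1"
  using one_constraint by simp

lemma Ft_one_right [simp]: "Ft u 1 = thL (F u) one_constraint"
  using one_constraint by (simp add: mtens_def add_eq_0_iff2)

lemma Ft_one_left [simp]: "Ft 1 u = thR (F u) one_constraint"
  using one_constraint by (simp add: mtens_def add_eq_0_iff2)

lemma Ft_zero_right [simp]: "Ft u 0 = thL (F u) zero_constraint - zero_constraint"
  using Ft_distrib_left[of u 0 0] by (simp add: algebra_simps)

lemma Ft_zero_left [simp]: "Ft 0 u = thR (F u) zero_constraint - zero_constraint"
  using Ft_distrib_right[of 0 0 u] by (simp add: algebra_simps)

text \<open>Acting on \<open>B\<close> through \<open>F\<close> is additive and multiplicative only up to the defects: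
  apply \<open>\<theta>\<close> to \<open>F_add_defect\<close> and \<open>F_mult_defect\<close> and use \<open>\<theta>\<^sub>d\<^sub>c b = c b\<close>.\<close>

lemma thL_F_add: "thL (F (v + w)) a = thL (F v) a + thL (F w) a - Fb v w * a"
  using arg_cong[OF F_add_defect[of v w], of "\<lambda>x. thL x a"] by (simp add: algebra_simps)

lemma thR_F_add: "thR (F (v + w)) a = thR (F v) a + thR (F w) a - a * Fb v w"
  using arg_cong[OF F_add_defect[of v w], of "\<lambda>x. thR x a"] by (simp add: algebra_simps)

lemma thL_F_mult: "thL (F (v * w)) a = thL (F v) (thL (F w) a) - Ft v w * a"
  using arg_cong[OF F_mult_defect[of v w], of "\<lambda>x. thL x a"]
  by (simp add: algebra_simps thL_op_mult)

lemma thR_F_mult: "thR (F (v * w)) a = thR (F w) (thR (F v) a) - a * Ft v w"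
  using arg_cong[OF F_mult_defect[of v w], of "\<lambda>x. thR x a"]
  by (simp add: algebra_simps thR_op_mult)

definition crossed_ring :: "('b \<times> 'q) ring" where
  "crossed_ring = \<lparr>carrier = UNIV,
     mult = (\<lambda>(a, u) (b, v). (a * b + thR (F v) a + thL (F u) b + Ft u v, u * v)),
     one = (- one_constraint, 1),
     zero = (- zero_constraint, 0),
     add = (\<lambda>(a, u) (b, v). (a + b + Fb u v, u + v))\<rparr>"

lemma crossed_ring_carrier [simp]: "carrier crossed_ring = UNIV"
  by (simp add: crossed_ring_def)

lemma crossed_ring_add [simp]:
  "(a, u) \<oplus>\<^bsub>crossed_ring\<^esub> (b, v) = (a + b + Fb u v, u + v)"
  by (simp add: crossed_ring_def)

lemma crossed_ring_mult [simp]: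
  "(a, u) \<otimes>\<^bsub>crossed_ring\<^esub> (b, v) = (a * b + thR (F v) a + thL (F u) b + Ft u v, u * v)"
  by (simp add: crossed_ring_def)

lemma crossed_ring_one [simp]: "\<one>\<^bsub>crossed_ring\<^esub> = (- one_constraint, 1)"
  by (simp add: crossed_ring_def)

lemma crossed_ring_zero [simp]: "\<zero>\<^bsub>crossed_ring\<^esub> = (- zero_constraint, 0)"
  by (simp add: crossed_ring_def)

lemma crossed_ring_add_assoc:
  "((a, u) \<oplus>\<^bsub>crossed_ring\<^esub> (b, v)) \<oplus>\<^bsub>crossed_ring\<^esub> (c, w)
     = (a, u) \<oplus>\<^bsub>crossed_ring\<^esub> ((b, v) \<oplus>\<^bsub>crossed_ring\<^esub> (c, w))"
  using Fb_assoc[of u v w] by (simp add: algebra_simps)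

lemma crossed_ring_add_commute:
  "(a, u) \<oplus>\<^bsub>crossed_ring\<^esub> (b, v) = (b, v) \<oplus>\<^bsub>crossed_ring\<^esub> (a, u)"
  using Fb_commute[of u v] by (simp add: algebra_simps)

lemma crossed_ring_mult_assoc:
  "((a, u) \<otimes>\<^bsub>crossed_ring\<^esub> (b, v)) \<otimes>\<^bsub>crossed_ring\<^esub> (c, w)
     = (a, u) \<otimes>\<^bsub>crossed_ring\<^esub> ((b, v) \<otimes>\<^bsub>crossed_ring\<^esub> (c, w))"
  by (simp add: thL_F_mult thR_F_mult thL_thR_commute mult_thL_eq_thR_mult Ft_assoc algebra_simps)

lemma crossed_ring_distrib_right:
  "((a, u) \<oplus>\<^bsub>crossed_ring\<^esub> (b, v)) \<otimes>\<^bsub>crossed_ring\<^esub> (c, w)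
     = (a, u) \<otimes>\<^bsub>crossed_ring\<^esub> (c, w) \<oplus>\<^bsub>crossed_ring\<^esub> (b, v) \<otimes>\<^bsub>crossed_ring\<^esub> (c, w)"
  using Ft_distrib_right[of u v w] by (simp add: thL_F_add algebra_simps)

lemma crossed_ring_distrib_left:
  "(c, w) \<otimes>\<^bsub>crossed_ring\<^esub> ((a, u) \<oplus>\<^bsub>crossed_ring\<^esub> (b, v))
     = (c, w) \<otimes>\<^bsub>crossed_ring\<^esub> (a, u) \<oplus>\<^bsub>crossed_ring\<^esub> (c, w) \<otimes>\<^bsub>crossed_ring\<^esub> (b, v)"
  using Ft_distrib_left[of w u v] by (simp add: thR_F_add algebra_simps)

lemma crossed_ring_one_mult: "\<one>\<^bsub>crossed_ring\<^esub> \<otimes>\<^bsub>crossed_ring\<^esub> (a, u) = (a, u)"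
  by (simp add: F_one algebra_simps)

lemma crossed_ring_mult_one: "(a, u) \<otimes>\<^bsub>crossed_ring\<^esub> \<one>\<^bsub>crossed_ring\<^esub> = (a, u)"
  by (simp add: F_one algebra_simps)

lemma ring_crossed_ring: "ring crossed_ring"
proof (rule ringI)
  show "abelian_group crossed_ring"
  proof (rule abelian_groupI)
    fix x :: "'b \<times> 'q"
    obtain a u where x: "x = (a, u)" by fastforce
    show "\<exists>y\<in>carrier crossed_ring. y \<oplus>\<^bsub>crossed_ring\<^esub> x = \<zero>\<^bsub>crossed_ring\<^esub>"
      by (rule bexI[of _ "(- zero_constraint - a - Fb (- u) u, - u)"]) (auto simp: x)
  next
    fix x y z :: "'b \<times> 'q"
    show "(x \<oplus>\<^bsub>crossed_ring\<^esub> y) \<oplus>\<^bsub>crossed_ring\<^esub> z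
        = x \<oplus>\<^bsub>crossed_ring\<^esub> (y \<oplus>\<^bsub>crossed_ring\<^esub> z)"
      by (cases x; cases y; cases z) (simp only: crossed_ring_add_assoc)
    show "x \<oplus>\<^bsub>crossed_ring\<^esub> y = y \<oplus>\<^bsub>crossed_ring\<^esub> x"
      by (cases x; cases y) (simp only: crossed_ring_add_commute)
    show "\<zero>\<^bsub>crossed_ring\<^esub> \<oplus>\<^bsub>crossed_ring\<^esub> x = x"
      by (cases x) simp
  qed auto
  show "monoid crossed_ring"
    by (rule monoidI) (auto simp: crossed_ring_mult_assoc crossed_ring_one_mult
        crossed_ring_mult_one simp del: crossed_ring_mult crossed_ring_one)
qed (auto simp: crossed_ring_distrib_left crossed_ring_distrib_right
    simp del: crossed_ring_mult crossed_ring_add)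

text \<open>The zero of the crossed ring is \<open>(- zero_constraint, 0)\<close>, hence the shift in the inclusion.\<close>

definition crossed_incl :: "'b \<Rightarrow> 'b \<times> 'q" where
  "crossed_incl b = (b - zero_constraint, 0)"

definition crossed_eps :: "'b \<times> 'q \<Rightarrow> 'd" where
  "crossed_eps x = d (fst x) + F (snd x)"

lemma inj_crossed_incl: "inj crossed_incl"
  by (auto simp: inj_def crossed_incl_def)

lemma crossed_eps_incl: "crossed_eps (crossed_incl b) = d b"
  by (simp add: crossed_eps_def crossed_incl_def F_zero)

lemma mult_crossed_incl:
  "x \<otimes>\<^bsub>crossed_ring\<^esub> crossed_incl b = crossed_incl (thL (crossed_eps x) b)"
  by (cases x) (simp add: crossed_incl_def crossed_eps_def F_zero algebra_simps)

lemma crossed_incl_mult: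
  "crossed_incl b \<otimes>\<^bsub>crossed_ring\<^esub> x = crossed_incl (thR (crossed_eps x) b)"
  by (cases x) (simp add: crossed_incl_def crossed_eps_def F_zero mult_thL_eq_thR_mult algebra_simps)

lemma thL'_crossed_ring: "thL' crossed_ring crossed_incl x = thL (crossed_eps x)"
  using mult_crossed_incl inj_crossed_incl by (simp add: thL'_def the_inv_f_f fun_eq_iff)

lemma thR'_crossed_ring: "thR' crossed_ring crossed_incl x = thR (crossed_eps x)"
  using crossed_incl_mult inj_crossed_incl by (simp add: thR'_def the_inv_f_f fun_eq_iff)

lemma crossed_eps_add:
  "crossed_eps (x \<oplus>\<^bsub>crossed_ring\<^esub> y) = crossed_eps x + crossed_eps y"
  using F_add_defect[of "snd x" "snd y"]
  by (cases x; cases y) (simp add: crossed_eps_def algebra_simps)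

lemma crossed_eps_mult:
  "crossed_eps (x \<otimes>\<^bsub>crossed_ring\<^esub> y) = crossed_eps x * crossed_eps y"
  using F_mult_defect[of "snd x" "snd y"]
  by (cases x; cases y) (simp add: crossed_eps_def algebra_simps)

lemma crossed_incl_add: "crossed_incl (a + b) = crossed_incl a \<oplus>\<^bsub>crossed_ring\<^esub> crossed_incl b"
  by (simp add: crossed_incl_def algebra_simps)

lemma snd_crossed_ring_add: "snd (x \<oplus>\<^bsub>crossed_ring\<^esub> y) = snd x + snd y"
  by (cases x; cases y) simp

lemma snd_crossed_ring_mult: "snd (x \<otimes>\<^bsub>crossed_ring\<^esub> y) = snd x * snd y"
  by (cases x; cases y) simp

lemma range_crossed_incl: "range crossed_incl = {x \<in> carrier crossed_ring. snd x = 0}"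
proof (intro equalityI subsetI)
  fix x assume "x \<in> {x \<in> carrier crossed_ring. snd x = 0}"
  then have "x = crossed_incl (fst x + zero_constraint)"
    by (cases x) (simp add: crossed_incl_def)
  then show "x \<in> range crossed_incl" by blast
qed (auto simp: crossed_incl_def)

lemma ring_extension_crossed_ring:
  "ring_extension d thL thR crossed_ring crossed_incl snd crossed_eps"
  unfolding ring_extension_def thL'_crossed_ring thR'_crossed_ring
proof (intro conjI ballI allI)
  show "snd ` carrier crossed_ring = UNIV"
    by (auto simp: image_def intro!: exI[of _ "(0, _)"])
qed (auto simp: ring_crossed_ring inj_crossed_incl range_crossed_incl bimult_theta
    crossed_eps_add crossed_eps_mult crossed_eps_incl thL_op_mult thR_op_mult
    crossed_incl_add snd_crossed_ring_add snd_crossed_ring_mult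
    mult_crossed_incl crossed_incl_mult simp del: crossed_ring_mult crossed_ring_add)

lemma induces_psi_crossed_ring: "induces_psi d F crossed_ring snd crossed_eps"
  unfolding induces_psi_def crossed_eps_def by auto

end

theorem mainTheorem7:
  fixes d :: "'b::ring \<Rightarrow> 'd::ring_1"
    and thL thR :: "'d \<Rightarrow> 'b \<Rightarrow> 'b"
    and F :: "'q::ring_1 \<Rightarrow> 'd"
    and Fb Ft :: "'q \<Rightarrow> 'q \<Rightarrow> 'b"
  assumes "e_system d thL thR"
    and "regular thL thR"
    and "ann_functor d thL thR F Fb Ft"
  shows "\<exists>(E :: ('b \<times> 'q) ring) j p eps.
           ring_extension d thL thR E j p eps \<and> induces_psi d F E p eps"
proof -
  interpret ann_functor_to_esystem d thL thR F Fb Ft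
    by unfold_locales (fact assms)+
  show ?thesis
    using ring_extension_crossed_ring induces_psi_crossed_ring by blast
qed

end
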